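(* Let $F_2=\langle a,b\rangle$ be the free group of rank two and let $\rho:F_2\to PSL(2,\mathbb{C})$ be a homomorphism with $\rho(a)$ parabolic. Then there is a homomorphism $\tilde\rho:F_2\to PSL(2,\mathbb{C})$ with $\tilde\rho(a)=\rho(a)$, $\tilde\rho(b)$ elliptic of order two, and \[\operatorname{tr}[\rho(a),\rho(b)]-2=\operatorname{tr}[\tilde\rho(a),\tilde\rho(b)]-2 .\] If $\rho(F_2)$ is discrete, then so is $\tilde\rho(F_2)$.
   Context: $[x,y]=xyx^{-1}y^{-1}$; the trace of a commutator is well defined in $PSL(2,\mathbb{C})$. *)

theory Defs
  imports "HOL-Analysis.Analysis"
begin

text \<open>Elements of PSL(2,C) are represented by lifts in SL(2,C), i.e. 2x2 complex
  matrices of determinant 1, considered up to sign.  A homomorphism from the free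
  group F2 = <a,b> is the same as a choice of images of a and b, so it is
  represented by a pair of lifts (A, B).\<close>

type_synonym mat2 = "complex ^ 2 ^ 2"

definition sl2 :: "mat2 \<Rightarrow> bool" where
  "sl2 M \<longleftrightarrow> det M = 1"

definition pm_id :: "mat2 \<Rightarrow> bool" where
  "pm_id M \<longleftrightarrow> M = mat 1 \<or> M = - mat 1"

definition parabolic :: "mat2 \<Rightarrow> bool" where
  "parabolic M \<longleftrightarrow> sl2 M \<and> \<not> pm_id M \<and> (trace M)\<^sup>2 = 4"

definition elliptic :: "mat2 \<Rightarrow> bool" where
  "elliptic M \<longleftrightarrow> sl2 M \<and> \<not> pm_id M \<and> trace M \<in> \<real> \<and> \<bar>Re (trace M)\<bar> < 2"

definition psl_order_two :: "mat2 \<Rightarrow> bool" where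
  "psl_order_two M \<longleftrightarrow> \<not> pm_id M \<and> pm_id (M ** M)"

definition commutator :: "mat2 \<Rightarrow> mat2 \<Rightarrow> mat2" where
  "commutator X Y = X ** Y ** matrix_inv X ** matrix_inv Y"

text \<open>Full preimage in SL(2,C) of the subgroup of PSL(2,C) generated by the
  classes of A and B (i.e. of the image rho(F2)).\<close>
inductive_set gen_preimage :: "mat2 \<Rightarrow> mat2 \<Rightarrow> mat2 set" for A B where
  one: "mat 1 \<in> gen_preimage A B"
| mone: "- mat 1 \<in> gen_preimage A B"
| lA: "g \<in> gen_preimage A B \<Longrightarrow> A ** g \<in> gen_preimage A B"
| lAi: "g \<in> gen_preimage A B \<Longrightarrow> matrix_inv A ** g \<in> gen_preimage A B"
| lB: "g \<in> gen_preimage A B \<Longrightarrow> B ** g \<in> gen_preimage A B"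
| lBi: "g \<in> gen_preimage A B \<Longrightarrow> matrix_inv B ** g \<in> gen_preimage A B"

text \<open>A subgroup of PSL(2,C) is discrete iff its preimage in SL(2,C) is a discrete
  subset (every point isolated).\<close>
definition discrete_set :: "mat2 set \<Rightarrow> bool" where
  "discrete_set S \<longleftrightarrow> (\<forall>x\<in>S. \<exists>e>0. \<forall>y\<in>S. dist y x < e \<longrightarrow> y = x)"

end

theory Submission
  imports Defs
begin

text \<open>
  A parabolic lift is \<open>A = s (1 + N)\<close> with \<open>s = \<plusminus>1\<close> and \<open>N x = \<omega>(x, w) w\<close>, where \<open>\<omega>\<close> is
  the symplectic form and \<open>w\<close> spans the fixed line of \<open>A\<close>; then
  \<open>tr [A, M] - 2 = \<omega>(w, M w)\<^sup>2\<close> for every \<open>M \<in> SL(2,\<complex>)\<close>.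
  If \<open>\<omega>(w, B w) \<noteq> 0\<close>, the trace-zero matrix \<open>H\<close> exchanging the lines through \<open>w\<close> and
  \<open>B w\<close> satisfies \<open>H A H\<inverse> = B A B\<inverse>\<close> and \<open>\<omega>(w, H w)\<^sup>2 = \<omega>(w, B w)\<^sup>2\<close>.
  Otherwise a trace-zero \<open>H\<close> with eigenvector \<open>w\<close> gives \<open>H A H\<inverse> = A\<inverse>\<close>, and both
  commutator traces equal 2.
  In both cases \<open>H A H\<inverse> \<in> \<langle>A, B\<rangle>\<close>, so \<open>K = \<langle>A, H A H\<inverse>\<rangle> \<subseteq> \<langle>A, B\<rangle>\<close> is normalised
  by \<open>H\<close> and \<open>\<langle>A, H\<rangle> = K \<union> K H\<close>. Hence all squares of \<open>\<langle>A, H\<rangle>\<close> lie in \<open>\<langle>A, B\<rangle>\<close>;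
  since \<open>z\<^sup>2 = 1\<close> forces \<open>z = \<plusminus>1\<close> in \<open>SL(2,\<complex>)\<close>, discreteness passes from \<open>\<langle>A, B\<rangle>\<close>
  to \<open>\<langle>A, H\<rangle>\<close>.
\<close>

section \<open>Two-by-two matrices\<close>

definition matrix2 :: "complex \<Rightarrow> complex \<Rightarrow> complex \<Rightarrow> complex \<Rightarrow> mat2" where
  "matrix2 a b c d = (\<chi> i j. if i = 1 then (if j = 1 then a else b) else (if j = 1 then c else d))"

lemma matrix2_nth [simp]:
  "matrix2 a b c d $ 1 $ 1 = a" "matrix2 a b c d $ 1 $ 2 = b"
  "matrix2 a b c d $ 2 $ 1 = c" "matrix2 a b c d $ 2 $ 2 = d"
  by (simp_all add: matrix2_def)

lemma mat2_eq_iff: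
  "(M::mat2) = N \<longleftrightarrow> M$1$1 = N$1$1 \<and> M$1$2 = N$1$2 \<and> M$2$1 = N$2$1 \<and> M$2$2 = N$2$2"
  by (auto simp: vec_eq_iff forall_2)

lemma mat2_induct [case_names matrix2]:
  assumes "\<And>a b c d. P (matrix2 a b c d)"
  shows "P M"
proof -
  have "M = matrix2 (M$1$1) (M$1$2) (M$2$1) (M$2$2)"
    by (simp add: mat2_eq_iff)
  with assms show ?thesis by metis
qed

lemma matrix2_eq_iff:
  "matrix2 a b c d = matrix2 a' b' c' d' \<longleftrightarrow> a = a' \<and> b = b' \<and> c = c' \<and> d = d'"
  by (simp add: mat2_eq_iff)

lemma matrix2_mult:
  "matrix2 a b c d ** matrix2 e f g h = matrix2 (a*e + b*g) (a*f + b*h) (c*e + d*g) (c*f + d*h)"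
  by (simp add: mat2_eq_iff matrix_matrix_mult_def sum_2)

lemma det_matrix2: "det (matrix2 a b c d) = a*d - b*c"
  by (simp add: det_2)

lemma trace_matrix2: "trace (matrix2 a b c d) = a + d"
  by (simp add: trace_def sum_2)

lemma mat_1_eq_matrix2: "mat 1 = matrix2 1 0 0 1"
  by (simp add: mat2_eq_iff mat_def)

lemma uminus_matrix2: "- matrix2 a b c d = matrix2 (-a) (-b) (-c) (-d)"
  by (simp add: mat2_eq_iff)

lemmas matrix2_simps = matrix2_eq_iff matrix2_mult det_matrix2 trace_matrix2
  mat_1_eq_matrix2 uminus_matrix2

lemma matrix_mul_uminus_left: "(- A) ** B = - (A ** B :: 'a::comm_ring_1^'n^'m)"
  by (simp add: matrix_matrix_mult_def vec_eq_iff sum_negf)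

lemma matrix_mul_uminus_right: "A ** (- B) = - (A ** B :: 'a::comm_ring_1^'n^'m)"
  by (simp add: matrix_matrix_mult_def vec_eq_iff sum_negf)

definition adjugate2 :: "mat2 \<Rightarrow> mat2" where
  "adjugate2 M = matrix2 (M$2$2) (- M$1$2) (- M$2$1) (M$1$1)"

lemma adjugate2_matrix2 [simp]: "adjugate2 (matrix2 a b c d) = matrix2 d (-b) (-c) a"
  by (simp add: adjugate2_def)

lemma mult_adjugate2: "det M = 1 \<Longrightarrow> M ** adjugate2 M = mat 1"
  by (induct M rule: mat2_induct) (simp add: matrix2_simps algebra_simps)

lemma adjugate2_mult: "det M = 1 \<Longrightarrow> adjugate2 M ** M = mat 1"
  by (induct M rule: mat2_induct) (simp add: matrix2_simps algebra_simps)

lemma matrix_inv_eq_adjugate2: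
  assumes "det M = 1"
  shows "matrix_inv M = adjugate2 M"
proof -
  have "M ** matrix_inv M = mat 1 \<and> matrix_inv M ** M = mat 1"
    unfolding matrix_inv_def
    by (rule someI[of _ "adjugate2 M"]) (simp add: assms mult_adjugate2 adjugate2_mult)
  have "matrix_inv M = matrix_inv M ** (M ** adjugate2 M)"
    by (simp add: assms mult_adjugate2)
  also have "\<dots> = (matrix_inv M ** M) ** adjugate2 M"
    by (rule matrix_mul_assoc)
  also have "\<dots> = adjugate2 M"
    using \<open>M ** matrix_inv M = mat 1 \<and> matrix_inv M ** M = mat 1\<close> by simp
  finally show ?thesis .
qed

lemma adjugate2_mult_distrib: "adjugate2 (M ** N) = adjugate2 N ** adjugate2 M"
  by (induct M rule: mat2_induct, induct N rule: mat2_induct) (simp add: matrix2_simps algebra_simps)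

lemma det_adjugate2: "det (adjugate2 M) = det M"
  by (induct M rule: mat2_induct) (simp add: matrix2_simps algebra_simps)

lemma adjugate2_adjugate2 [simp]: "adjugate2 (adjugate2 M) = M"
  by (induct M rule: mat2_induct) simp

lemma adjugate2_mat_1 [simp]: "adjugate2 (mat 1) = mat 1"
  by (simp add: mat_1_eq_matrix2)

lemma adjugate2_uminus: "adjugate2 (- M) = - adjugate2 M"
  by (induct M rule: mat2_induct) (simp add: matrix2_simps; algebra)

lemma adjugate2_eq_neg_if_trace_zero: "trace M = 0 \<Longrightarrow> adjugate2 M = - M"
  by (induct M rule: mat2_induct) (simp add: matrix2_simps eq_neg_iff_add_eq_0 add.commute)

lemma commutator_eq_adjugate2:
  "det X = 1 \<Longrightarrow> det Y = 1 \<Longrightarrow> commutator X Y = X ** Y ** adjugate2 X ** adjugate2 Y"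
  by (simp add: commutator_def matrix_inv_eq_adjugate2)

lemma square_eq_neg_1_if_trace_zero:
  "det (M::mat2) = 1 \<Longrightarrow> trace M = 0 \<Longrightarrow> M ** M = - mat 1"
  by (induct M rule: mat2_induct) (simp add: matrix2_simps; algebra)

lemma pm_id_if_square_eq_1: "det (z::mat2) = 1 \<Longrightarrow> z ** z = mat 1 \<Longrightarrow> pm_id z"
proof (induct z rule: mat2_induct)
  case (matrix2 a b c d)
  then have det: "a*d - b*c = 1"
    and sq: "a*a + b*c = 1" "b * (a + d) = 0" "c * (a + d) = 0" "d*d + b*c = 1"
    by (simp_all add: matrix2_simps algebra_simps)
  have "a + d \<noteq> 0"
  proof
    assume "a + d = 0"
    then have "a*d - b*c + (a*a + b*c) = 0" by (simp add: algebra_simps add_eq_0_iff2)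
    with det sq(1) show False by simp
  qed
  then have "b = 0" "c = 0" using sq(2,3) by simp_all
  with det sq(1) have "a = d" "a*a = 1" by algebra+
  then have "(a = 1 \<or> a = -1) \<and> d = a"
    by (metis power2_eq_square square_eq_1_iff)
  then show ?case using \<open>b = 0\<close> \<open>c = 0\<close> by (auto simp: pm_id_def matrix2_simps)
qed

lemma elliptic_order_two_if_trace_zero:
  assumes "sl2 M" "trace M = 0"
  shows "elliptic M" "psl_order_two M"
proof -
  have "\<not> pm_id M"
    using assms(2) by (auto simp: pm_id_def matrix2_simps)
  moreover have "M ** M = - mat 1"
    using assms by (simp add: sl2_def square_eq_neg_1_if_trace_zero)
  ultimately show "elliptic M" "psl_order_two M"
    using assms by (simp_all add: elliptic_def psl_order_two_def pm_id_def)
qed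

section \<open>Conjugation and generated groups\<close>

definition conj2 :: "mat2 \<Rightarrow> mat2 \<Rightarrow> mat2" where
  "conj2 h X = h ** X ** adjugate2 h"

lemma conj2_mult: "det h = 1 \<Longrightarrow> conj2 h (X ** Y) = conj2 h X ** conj2 h Y"
  by (simp add: conj2_def matrix_mul_assoc adjugate2_mult flip: matrix_mul_assoc[of _ "adjugate2 h"])

lemma conj2_uminus: "conj2 h (- X) = - conj2 h X"
  by (simp add: conj2_def matrix_mul_uminus_left matrix_mul_uminus_right)

lemma conj2_mat_1: "det h = 1 \<Longrightarrow> conj2 h (mat 1) = mat 1"
  by (simp add: conj2_def mult_adjugate2)

lemma adjugate2_conj2: "adjugate2 (conj2 h X) = conj2 h (adjugate2 X)"
  by (simp add: conj2_def adjugate2_mult_distrib matrix_mul_assoc)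

lemma det_conj2: "det h = 1 \<Longrightarrow> det (conj2 h X) = det X"
  by (simp add: conj2_def det_mul det_adjugate2)

lemma conj2_conj2: "conj2 h (conj2 k X) = conj2 (h ** k) X"
  by (simp add: conj2_def adjugate2_mult_distrib matrix_mul_assoc)

lemma conj2_mult_self_right: "det h = 1 \<Longrightarrow> conj2 h (X ** h) = h ** X"
  by (simp add: conj2_def mult_adjugate2 flip: matrix_mul_assoc)

lemma conj2_uminus_mat_1: "conj2 (- mat 1) X = X"
  by (simp add: conj2_def adjugate2_uminus matrix_mul_uminus_left matrix_mul_uminus_right)

context
  fixes A B :: mat2
  assumes det_A: "det A = 1" and det_B: "det B = 1"
begin

lemma det_gen_preimage: "g \<in> gen_preimage A B \<Longrightarrow> det g = 1"
  by (induction rule: gen_preimage.induct)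
    (simp_all add: det_A det_B det_mul matrix_inv_eq_adjugate2 det_adjugate2 matrix2_simps)

lemma gen_preimage_uminus: "g \<in> gen_preimage A B \<Longrightarrow> - g \<in> gen_preimage A B"
  by (induction rule: gen_preimage.induct)
    (simp_all add: gen_preimage.intros flip: matrix_mul_uminus_right)

lemma gen_preimage_mult:
  "g \<in> gen_preimage A B \<Longrightarrow> k \<in> gen_preimage A B \<Longrightarrow> g ** k \<in> gen_preimage A B"
  by (induction rule: gen_preimage.induct)
    (simp_all add: gen_preimage.intros gen_preimage_uminus matrix_mul_uminus_left
      flip: matrix_mul_assoc)

lemma generators_in_gen_preimage:
  "A \<in> gen_preimage A B" "B \<in> gen_preimage A B"
  "adjugate2 A \<in> gen_preimage A B" "adjugate2 B \<in> gen_preimage A B"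
  using gen_preimage.intros(3-6)[OF gen_preimage.one, where A=A and B=B]
  by (simp_all add: det_A det_B matrix_inv_eq_adjugate2)

lemma gen_preimage_adjugate2: "g \<in> gen_preimage A B \<Longrightarrow> adjugate2 g \<in> gen_preimage A B"
  by (induction rule: gen_preimage.induct)
    (simp_all add: gen_preimage.intros adjugate2_uminus adjugate2_mult_distrib gen_preimage_mult
      generators_in_gen_preimage det_A det_B matrix_inv_eq_adjugate2)

lemma gen_preimage_subset:
  assumes "X \<in> gen_preimage A B" "Y \<in> gen_preimage A B"
  shows "gen_preimage X Y \<subseteq> gen_preimage A B"
proof
  fix g assume "g \<in> gen_preimage X Y"
  then show "g \<in> gen_preimage A B"
    by induction (simp_all add: assms gen_preimage.intros gen_preimage_mult gen_preimage_adjugate2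
        det_gen_preimage matrix_inv_eq_adjugate2)
qed

lemma conj2_gen_preimage:
  assumes "det h = 1"
  shows "g \<in> gen_preimage A B \<Longrightarrow> conj2 h g \<in> gen_preimage (conj2 h A) (conj2 h B)"
proof (induction rule: gen_preimage.induct)
  case (lAi g)
  have "conj2 h (matrix_inv A ** g) = matrix_inv (conj2 h A) ** conj2 h g"
    by (simp add: assms det_A det_conj2 conj2_mult matrix_inv_eq_adjugate2 adjugate2_conj2)
  with lAi.IH show ?case by (simp add: gen_preimage.lAi)
next
  case (lBi g)
  have "conj2 h (matrix_inv B ** g) = matrix_inv (conj2 h B) ** conj2 h g"
    by (simp add: assms det_B det_conj2 conj2_mult matrix_inv_eq_adjugate2 adjugate2_conj2)
  with lBi.IH show ?case by (simp add: gen_preimage.lBi)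
qed (simp_all add: assms gen_preimage.intros conj2_mult conj2_uminus conj2_mat_1)

end

section \<open>Discreteness\<close>

lemma discrete_set_if_squares_in_discrete:
  assumes disc: "discrete_set K" and one: "mat 1 \<in> K"
    and det: "\<And>x. x \<in> S \<Longrightarrow> det x = 1"
    and quotient: "\<And>x y. x \<in> S \<Longrightarrow> y \<in> S \<Longrightarrow> y ** adjugate2 x \<in> S"
    and squares: "\<And>z. z \<in> S \<Longrightarrow> z ** z \<in> K"
  shows "discrete_set S"
  unfolding discrete_set_def
proof
  obtain e where "e > 0" and e: "\<And>y. y \<in> K \<Longrightarrow> dist y (mat 1) < e \<Longrightarrow> y = mat 1"
    using disc one unfolding discrete_set_def by blast
  fix x assume "x \<in> S"
  define f where "f y = (y ** adjugate2 x) ** (y ** adjugate2 x)" for y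
  have "continuous_on UNIV f"
    unfolding f_def matrix_matrix_mult_def by (intro continuous_intros)
  moreover have "f x = mat 1"
    using det[OF \<open>x \<in> S\<close>] by (simp add: f_def mult_adjugate2)
  ultimately obtain d where "d > 0" and d: "\<And>y. dist y x < d \<Longrightarrow> dist (f y) (mat 1) < e"
    using \<open>e > 0\<close> unfolding continuous_on_iff by (metis UNIV_I)
  have "x \<noteq> 0"
    using det[OF \<open>x \<in> S\<close>] by (auto simp: det_2)
  then have "x \<noteq> - x"
    by (metis add.right_inverse scaleR_2 scaleR_eq_0_iff zero_neq_numeral)
  show "\<exists>r>0. \<forall>y\<in>S. dist y x < r \<longrightarrow> y = x"
  proof (intro exI[of _ "min d (dist x (- x))"] conjI ballI impI)
    show "min d (dist x (- x)) > 0"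
      using \<open>d > 0\<close> \<open>x \<noteq> - x\<close> by simp
    fix y assume "y \<in> S" and close: "dist y x < min d (dist x (- x))"
    define z where "z = y ** adjugate2 x"
    have "z ** z = mat 1"
      using e[of "f y"] squares quotient \<open>x \<in> S\<close> \<open>y \<in> S\<close> d close
      by (simp add: f_def z_def)
    moreover have "det z = 1"
      using det \<open>x \<in> S\<close> \<open>y \<in> S\<close> by (simp add: z_def det_mul det_adjugate2)
    ultimately have "pm_id z"
      by (rule pm_id_if_square_eq_1[rotated])
    moreover have "y = z ** x"
      using adjugate2_mult det \<open>x \<in> S\<close> by (simp add: z_def flip: matrix_mul_assoc)
    ultimately have "y = x \<or> y = - x"
      by (auto simp: pm_id_def matrix_mul_uminus_left)
    then show "y = x"
      using close by (auto simp: dist_commute)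
  qed
qed

context
  fixes A h :: mat2
  assumes det_A: "det A = 1" and det_h: "det h = 1" and trace_h: "trace h = 0"
begin

lemma det_conj2_involution: "det (conj2 h A) = 1"
  by (simp add: det_A det_h det_conj2)

lemmas gen_preimage_conj2_intros =
  gen_preimage.one gen_preimage.mone
  generators_in_gen_preimage[OF det_A det_conj2_involution]
  gen_preimage_mult[OF det_A det_conj2_involution]
  gen_preimage_uminus[OF det_A det_conj2_involution]

lemma conj2_involution_gen_preimage:
  assumes "g \<in> gen_preimage A (conj2 h A)"
  shows "conj2 h g \<in> gen_preimage A (conj2 h A)"
proof -
  have "conj2 h (conj2 h A) = A"
    using det_h trace_h by (simp add: conj2_conj2 square_eq_neg_1_if_trace_zero conj2_uminus_mat_1)
  then have "conj2 h g \<in> gen_preimage (conj2 h A) A"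
    using conj2_gen_preimage[OF det_A det_conj2_involution det_h assms] by simp
  also have "\<dots> \<subseteq> gen_preimage A (conj2 h A)"
    by (rule gen_preimage_subset[OF det_A det_conj2_involution])
      (simp_all add: gen_preimage_conj2_intros)
  finally show ?thesis .
qed

lemma gen_preimage_involution_cosets:
  assumes "g \<in> gen_preimage A h"
  shows "g \<in> gen_preimage A (conj2 h A) \<or> g ** h \<in> gen_preimage A (conj2 h A)"
proof -
  let ?K = "gen_preimage A (conj2 h A)"
  have left_mult_h: "h ** g \<in> ?K \<or> h ** g ** h \<in> ?K" if "g \<in> ?K \<or> g ** h \<in> ?K" for g
    using that
  proof
    assume "g \<in> ?K"
    moreover have "h ** g ** h = - conj2 h g"
      using det_h trace_h by (simp add: conj2_def adjugate2_eq_neg_if_trace_zero matrix_mul_uminus_right)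
    ultimately show ?thesis
      by (simp add: conj2_involution_gen_preimage gen_preimage_conj2_intros)
  next
    assume "g ** h \<in> ?K"
    then show ?thesis
      using conj2_involution_gen_preimage[of "g ** h"] by (simp add: det_h conj2_mult_self_right)
  qed
  from assms show ?thesis
  proof induction
    case (lB g)
    show ?case by (rule left_mult_h[OF lB.IH])
  next
    case (lBi g)
    have "matrix_inv h ** g = - (h ** g)"
      using det_h trace_h
      by (simp add: matrix_inv_eq_adjugate2 adjugate2_eq_neg_if_trace_zero matrix_mul_uminus_left)
    with left_mult_h[OF lBi.IH] show ?case
      by (auto simp: gen_preimage_conj2_intros matrix_mul_uminus_left)
  qed (auto simp: gen_preimage_conj2_intros matrix_inv_eq_adjugate2 det_A simp flip: matrix_mul_assoc)
qed

lemma gen_preimage_involution_square: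
  assumes "g \<in> gen_preimage A h"
  shows "g ** g \<in> gen_preimage A (conj2 h A)"
  using gen_preimage_involution_cosets[OF assms]
proof
  assume gh: "g ** h \<in> gen_preimage A (conj2 h A)"
  have "g ** g = - (g ** (h ** h) ** g)"
    using det_h trace_h
    by (simp add: square_eq_neg_1_if_trace_zero matrix_mul_uminus_left matrix_mul_uminus_right)
  also have "\<dots> = (g ** h) ** - conj2 h (g ** h)"
    by (simp add: det_h conj2_mult_self_right matrix_mul_uminus_right matrix_mul_assoc)
  finally show ?thesis
    by (simp only:) (intro gen_preimage_conj2_intros conj2_involution_gen_preimage gh)
qed (simp add: gen_preimage_conj2_intros)

end

lemma discrete_set_gen_preimage_involution:
  assumes det_A: "det A = 1" and det_B: "det B = 1"
    and det_h: "det h = 1" and trace_h: "trace h = 0"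
    and conj_A: "conj2 h A \<in> gen_preimage A B"
    and disc: "discrete_set (gen_preimage A B)"
  shows "discrete_set (gen_preimage A h)"
proof (rule discrete_set_if_squares_in_discrete[OF disc gen_preimage.one])
  have "gen_preimage A (conj2 h A) \<subseteq> gen_preimage A B"
    using gen_preimage_subset[OF det_A det_B] generators_in_gen_preimage[OF det_A det_B] conj_A
    by blast
  then show "g ** g \<in> gen_preimage A B" if "g \<in> gen_preimage A h" for g
    using gen_preimage_involution_square[OF det_A det_h trace_h that] by blast
qed (simp_all add: det_gen_preimage[OF det_A det_h] gen_preimage_mult[OF det_A det_h]
    gen_preimage_adjugate2[OF det_A det_h])

section \<open>Parabolic elements and involutions\<close>

lemma vec2_induct [case_names vector]:
  fixes w :: "'a::zero^2"
  assumes "\<And>x y. P (vector [x, y])"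
  shows "P w"
proof -
  have "w = vector [w$1, w$2]"
    by (simp add: vec_eq_iff forall_2)
  with assms show ?thesis by metis
qed

definition symplectic2 :: "complex^2 \<Rightarrow> complex^2 \<Rightarrow> complex" where
  "symplectic2 w z = w$1 * z$2 - w$2 * z$1"

lemma matrix_vector_mult_nth_2:
  "(M *v w)$1 = M$1$1 * w$1 + M$1$2 * w$2" "(M *v w)$2 = M$2$1 * w$1 + M$2$2 * w$2"
  for M :: mat2
  by (simp_all add: matrix_vector_mult_def sum_2)

lemma symplectic2_eq_1_witness:
  assumes "w \<noteq> 0"
  obtains z where "symplectic2 w z = 1"
proof (cases "w$1 = 0")
  case True
  with assms have "w$2 \<noteq> 0"
    by (auto simp: vec_eq_iff forall_2)
  with True show ?thesis
    using that[of "vector [- 1 / w$2, 0]"] by (simp add: symplectic2_def)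
next
  case False
  then show ?thesis
    using that[of "vector [0, 1 / w$1]"] by (simp add: symplectic2_def)
qed

text \<open>\<open>s (1 + N)\<close>, where \<open>N x = symplectic2 x w *s w\<close> is nilpotent.\<close>

definition parabolic_matrix :: "complex \<Rightarrow> complex^2 \<Rightarrow> mat2" where
  "parabolic_matrix s w =
    matrix2 (s * (1 + w$1 * w$2)) (- s * (w$1)^2) (s * (w$2)^2) (s * (1 - w$1 * w$2))"

lemma det_parabolic_matrix: "s^2 = 1 \<Longrightarrow> det (parabolic_matrix s w) = 1"
  unfolding parabolic_matrix_def by (simp add: matrix2_simps) algebra

lemma parabolic_matrix_uminus: "parabolic_matrix s (- w) = parabolic_matrix s w"
  by (simp add: parabolic_matrix_def)

lemma parabolic_matrix_scale_ii: "parabolic_matrix s (\<i> *s w) = adjugate2 (parabolic_matrix s w)"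
  by (simp add: parabolic_matrix_def power_mult_distrib algebra_simps)

lemma conj2_parabolic_matrix:
  assumes "det M = 1"
  shows "conj2 M (parabolic_matrix s w) = parabolic_matrix s (M *v w)"
proof -
  obtain a b c d where M: "M = matrix2 a b c d"
    by (induct M rule: mat2_induct) blast
  obtain x y where w: "w = vector [x, y]"
    by (induct w rule: vec2_induct) blast
  have "a * d - b * c = 1"
    using assms by (simp add: M det_matrix2)
  then show ?thesis
    unfolding M w
    by (simp add: conj2_def parabolic_matrix_def matrix_vector_mult_nth_2 matrix2_simps) algebra
qed

lemma trace_commutator_parabolic_matrix:
  assumes "s^2 = 1" "det M = 1"
  shows "trace (commutator (parabolic_matrix s w) M) = 2 + (symplectic2 w (M *v w))^2"
proof -
  have "trace (parabolic_matrix s w ** M ** adjugate2 (parabolic_matrix s w) ** adjugate2 M)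
      = 2 + (symplectic2 w (M *v w))^2"
    using assms(2)
  proof (induct M rule: mat2_induct)
    case (matrix2 a b c d)
    with assms(1) show ?case
      by (simp add: parabolic_matrix_def symplectic2_def matrix_vector_mult_nth_2 matrix2_simps)
        algebra
  qed
  with assms show ?thesis
    by (simp add: commutator_eq_adjugate2 det_parabolic_matrix)
qed

lemma nilpotent2_factorization:
  fixes p q r :: complex
  assumes "p * p + q * r = 0"
  obtains x y where "x * y = p" "x^2 = - q" "y^2 = r"
proof (cases "q = 0")
  case True
  with assms have "p = 0" by simp
  with True show ?thesis
    using that[of 0 "csqrt r"] by simp
next
  case False
  define x where "x = csqrt (- q)"
  have x2: "x^2 = - q" by (simp add: x_def)
  with False have "x \<noteq> 0" by auto
  have "q * r = - (p * p)"
    using assms by (simp add: add_eq_0_iff)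
  then have "(p / x)^2 = r"
    using x2 False by (simp add: power_divide power2_eq_square field_simps)
  then show ?thesis
    using that[of x "p / x"] x2 \<open>x \<noteq> 0\<close> by simp
qed

lemma parabolic_matrix_if_parabolic:
  assumes "parabolic A"
  obtains s w where "s^2 = 1" "w \<noteq> 0" "A = parabolic_matrix s w"
proof -
  obtain a b c d where A: "A = matrix2 a b c d"
    by (induct A rule: mat2_induct) blast
  have det: "a * d - b * c = 1" and tr: "(a + d)^2 = 4" and "\<not> pm_id A"
    using assms by (auto simp: parabolic_def sl2_def A matrix2_simps)
  define s where "s = (a + d) / 2"
  have s2: "s^2 = 1" and s_tr: "2 * s = a + d"
    using tr by (simp_all add: s_def power_divide)
  \<comment> \<open>\<open>s A - 1\<close> is nilpotent\<close>
  have "(s * a - 1) * (s * a - 1) + (s * b) * (s * c) = 0"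
    using s2 s_tr det by algebra
  then obtain x y where xy: "x * y = s * a - 1" "x^2 = - (s * b)" "y^2 = s * c"
    by (rule nilpotent2_factorization)
  define w where "w = (vector [x, y] :: complex^2)"
  have "A = parabolic_matrix s w"
    unfolding A parabolic_matrix_def w_def using xy s2 s_tr
    by (simp add: matrix2_eq_iff) algebra
  moreover have "w \<noteq> 0"
  proof
    assume "w = 0"
    then have "x = 0" "y = 0"
      by (simp_all add: w_def vec_eq_iff forall_2)
    with xy s2 s_tr have "A = matrix2 s 0 0 s"
      unfolding A by (simp add: matrix2_eq_iff) algebra
    with s2 have "pm_id A"
      by (auto simp: pm_id_def power2_eq_1_iff matrix2_simps)
    with \<open>\<not> pm_id A\<close> show False ..
  qed
  ultimately show ?thesis
    using that s2 by blast
qed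

text \<open>The trace-zero matrix exchanging the lines through \<open>w\<close> and \<open>z\<close>.\<close>

definition swap_involution :: "complex^2 \<Rightarrow> complex^2 \<Rightarrow> mat2" where
  "swap_involution w z = (let k = 1 / symplectic2 w z in
    matrix2 (- k * (w$1 * w$2 + z$1 * z$2)) (k * ((w$1)^2 + (z$1)^2))
      (- k * ((w$2)^2 + (z$2)^2)) (k * (w$1 * w$2 + z$1 * z$2)))"

lemma
  assumes "symplectic2 w z \<noteq> 0"
  shows det_swap_involution: "det (swap_involution w z) = 1"
    and swap_involution_apply: "swap_involution w z *v w = - z"
proof -
  define k where "k = 1 / symplectic2 w z"
  have k: "k * (w$1 * z$2 - w$2 * z$1) = 1"
    using assms by (simp add: k_def symplectic2_def)
  show "det (swap_involution w z) = 1"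
    unfolding swap_involution_def Let_def k_def[symmetric]
    using k by (simp add: matrix2_simps) algebra
  show "swap_involution w z *v w = - z"
    unfolding swap_involution_def Let_def k_def[symmetric]
    using k by (simp add: vec_eq_iff forall_2 matrix_vector_mult_nth_2; algebra)
qed

lemma trace_swap_involution: "trace (swap_involution w z) = 0"
  by (simp add: swap_involution_def trace_matrix2)

text \<open>The trace-zero matrix with eigenvectors \<open>w\<close> and \<open>z\<close>, for eigenvalues \<open>\<i>\<close> and \<open>-\<i>\<close>.\<close>

definition involution_fixing :: "complex^2 \<Rightarrow> complex^2 \<Rightarrow> mat2" where
  "involution_fixing w z =
    matrix2 (\<i> * (w$1 * z$2 + w$2 * z$1)) (- 2 * \<i> * w$1 * z$1)
      (2 * \<i> * w$2 * z$2) (- \<i> * (w$1 * z$2 + w$2 * z$1))"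

lemma det_involution_fixing: "symplectic2 w z = 1 \<Longrightarrow> det (involution_fixing w z) = 1"
  unfolding involution_fixing_def symplectic2_def
  by (simp add: matrix2_simps) (insert i_squared, algebra)

lemma involution_fixing_apply:
  "symplectic2 w z = 1 \<Longrightarrow> involution_fixing w z *v w = \<i> *s w"
  unfolding involution_fixing_def symplectic2_def
  by (simp add: vec_eq_iff forall_2 matrix_vector_mult_nth_2; algebra)

lemma trace_involution_fixing: "trace (involution_fixing w z) = 0"
  by (simp add: involution_fixing_def trace_matrix2)

lemma involution_with_same_commutator_trace:
  assumes det_A: "det A = 1" and det_B: "det B = 1" and "parabolic A"
  obtains H where "det H = 1" "trace H = 0"
    "trace (commutator A H) = trace (commutator A B)" "conj2 H A \<in> gen_preimage A B"
proof -
  obtain s w where s2: "s^2 = 1" and "w \<noteq> 0" and A: "A = parabolic_matrix s w"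
    using parabolic_matrix_if_parabolic[OF \<open>parabolic A\<close>] by blast
  have trace_AB: "trace (commutator A B) = 2 + (symplectic2 w (B *v w))^2"
    unfolding A by (rule trace_commutator_parabolic_matrix[OF s2 det_B])
  show ?thesis
  proof (cases "symplectic2 w (B *v w) = 0")
    case False
    define H where "H = swap_involution w (B *v w)"
    have det_H: "det H = 1" and H_w: "H *v w = - (B *v w)"
      using False by (simp_all add: H_def det_swap_involution swap_involution_apply)
    have "trace (commutator A H) = trace (commutator A B)"
      using trace_commutator_parabolic_matrix[OF s2 det_H] trace_AB
      by (simp add: A H_w symplectic2_def power2_commute algebra_simps)
    moreover have "conj2 H A = conj2 B A"
      by (simp add: A conj2_parabolic_matrix det_H det_B H_w parabolic_matrix_uminus)
    moreover have "conj2 B A \<in> gen_preimage A B"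
      by (simp add: conj2_def gen_preimage_mult generators_in_gen_preimage det_A det_B)
    ultimately show ?thesis
      using that det_H trace_swap_involution H_def by metis
  next
    case True
    obtain z where z: "symplectic2 w z = 1"
      using symplectic2_eq_1_witness[OF \<open>w \<noteq> 0\<close>] by blast
    define H where "H = involution_fixing w z"
    have det_H: "det H = 1" and H_w: "H *v w = \<i> *s w"
      using z by (simp_all add: H_def det_involution_fixing involution_fixing_apply)
    have "trace (commutator A H) = trace (commutator A B)"
      using trace_commutator_parabolic_matrix[OF s2 det_H] trace_AB True
      by (simp add: A H_w symplectic2_def algebra_simps)
    moreover have "conj2 H A = adjugate2 A"
      by (simp add: A conj2_parabolic_matrix det_H H_w parabolic_matrix_scale_ii)
    moreover have "adjugate2 A \<in> gen_preimage A B"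
      by (simp add: generators_in_gen_preimage det_A det_B)
    ultimately show ?thesis
      using that det_H trace_involution_fixing H_def by metis
  qed
qed

theorem theorem6:
  fixes A B :: mat2
  assumes "sl2 A" and "sl2 B" and "parabolic A"
  shows "\<exists>B'. sl2 B' \<and> elliptic B' \<and> psl_order_two B' \<and>
           trace (commutator A B) - 2 = trace (commutator A B') - 2 \<and>
           (discrete_set (gen_preimage A B) \<longrightarrow> discrete_set (gen_preimage A B'))"
proof -
  have det_A: "det A = 1" and det_B: "det B = 1"
    using assms by (simp_all add: sl2_def)
  obtain H where det_H: "det H = 1" and trace_H: "trace H = 0"
    and "trace (commutator A H) = trace (commutator A B)" and "conj2 H A \<in> gen_preimage A B"
    using involution_with_same_commutator_trace[OF det_A det_B \<open>parabolic A\<close>] by blast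
  moreover have "sl2 H"
    using det_H by (simp add: sl2_def)
  moreover note elliptic_order_two_if_trace_zero[OF \<open>sl2 H\<close> trace_H]
  moreover note discrete_set_gen_preimage_involution[OF det_A det_B det_H trace_H]
  ultimately show ?thesis
    by metis
qed

end
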